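(* Let $d\ge3$ and $\beta>\beta^*(d)=\log\left(\frac{\sqrt{d-1}+1}{\sqrt{d-1}-1}\right)$. Then there exists $\varepsilon>0$ such that \[\mathcal{B}_{\mathrm{Ising}}(\pi^*_\varepsilon,\beta,d)>\log2+\frac d2\log\frac{1+e^{-\beta}}{2},\] where $\pi^*_\varepsilon=\frac12(\delta_{2\varepsilon}+\delta_{-2\varepsilon})$.
   Context: For a probability measure $\pi$ on $[-1,1]$ let $(\mu_{\pi,i})_{i\ge1}$ be independent samples from $\pi$, let $\Lambda(x)=x\log x$, and define the Bethe free energy \[\mathcal{B}_{\mathrm{Ising}}(\pi,\beta,d)=\mathbb{E}\left[\frac{\Lambda\left(\sum_{\sigma\in\{\pm1\}}\prod_{i=1}^d\left(1-(1-e^{-\beta})\frac{1+\sigma\mu_{\pi,i}}{2}\right)\right)}{2^{1-d}(1+e^{-\beta})^d}-\frac{d\,\Lambda\left(1-(1-e^{-\beta})\frac{1+\mu_{\pi,1}\mu_{\pi,2}}{2}\right)}{1+e^{-\beta}}\right].\] $\delta_x$ is the point mass at $x$. *)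

theory Defs
  imports "HOL-Probability.Probability"
begin

definition Lambda :: "real \<Rightarrow> real" where
  "Lambda x = x * ln x"

text \<open>Bethe free energy of the Ising model. The i.i.d. samples
  mu_1, mu_2, ... from pi are modelled by the product measure on
  coordinates 0, ..., max d 2 - 1 (only these coordinates occur).\<close>
definition B_Ising :: "real measure \<Rightarrow> real \<Rightarrow> nat \<Rightarrow> real" where
  "B_Ising P \<beta> d =
     (\<integral> mu. (Lambda (\<Sum>\<sigma>\<in>{-1, 1::real}. \<Prod>i<d. (1 - (1 - exp (-\<beta>)) * (1 + \<sigma> * mu i) / 2))
                / (2 powr (1 - real d) * (1 + exp (-\<beta>)) ^ d)
            - real d * Lambda (1 - (1 - exp (-\<beta>)) * (1 + mu 0 * mu 1) / 2) / (1 + exp (-\<beta>)))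
      \<partial>(PiM {..<max d 2} (\<lambda>_. P)))"

definition beta_star :: "nat \<Rightarrow> real" where
  "beta_star d = ln ((sqrt (real d - 1) + 1) / (sqrt (real d - 1) - 1))"

definition pi_star :: "real \<Rightarrow> real measure" where
  "pi_star \<epsilon> = measure_pmf (pmf_of_set {2 * \<epsilon>, - 2 * \<epsilon>})"

end

theory Submission
  imports Defs
begin

(* Let mu be uniform on {X, -X}^d with X = 2 eps, and put q = exp (-beta), c = (1 + q) / 2,
   tau = (1 - q) / (1 + q). The Bethe integrand equals
     Z (d ln c + ln 2) + Lambda Z - d/2 (e ln c + Lambda e),
   where Z = (prod_i (1 + tau mu_i) + prod_i (1 - tau mu_i)) / 2 and e = 1 - tau mu_0 mu_1 both have
   mean 1. Since Lambda (1 + w) = w + w^2/2 + O(|w|^3), the linear terms average out: the star term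
   gains at least (1/2 - 2 d tau X) E (Z - 1)^2 >= (1/2 - 2 d tau X) d (d - 1)/2 (tau X)^4, while the
   edge term costs at most d/2 (nu^2/2 + nu^3), where nu = tau X^2. As (tau X)^4 = tau^2 nu^2, the
   excess over ln 2 + d/2 ln c is at least
     d/2 nu^2 ((1/2 - 2 d tau X) (d - 1) tau^2 - 1/2 - nu),
   which is positive for small X exactly because (d - 1) tau^2 > 1, i.e. beta > beta_star d. *)

lemma value_at_0_le_if_deriv_sign:
  fixes f f' :: "real \<Rightarrow> real"
  assumes x: "a < x" "x < b" and "a < 0" "0 < b"
    and deriv: "\<And>z. a < z \<Longrightarrow> z < b \<Longrightarrow> (f has_real_derivative f' z) (at z)"
    and sign: "\<And>z. a < z \<Longrightarrow> z < b \<Longrightarrow> 0 \<le> z * f' z"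
  shows "f 0 \<le> f x"
proof -
  have "isCont f z" if "a < z" "z < b" for z
    using deriv[OF that] by (rule DERIV_isCont)
  then have cont: "continuous_on {u..v} f" if "a < u" "v < b" for u v
    using that by (intro continuous_at_imp_continuous_on) auto
  show ?thesis
  proof (cases "0 \<le> x")
    case True
    show ?thesis
    proof (rule DERIV_nonneg_imp_increasing_open[OF True _ cont])
      fix z assume z: "0 < z" "z < x"
      with assms have "a < z" "z < b" by auto
      moreover from sign[OF this] z have "0 \<le> f' z" by (simp add: zero_le_mult_iff)
      ultimately show "\<exists>y. (f has_real_derivative y) (at z) \<and> 0 \<le> y"
        using deriv by blast
    qed (use assms in auto)
  next
    case False
    show ?thesis
    proof (rule DERIV_nonpos_imp_decreasing_open[of x 0 f, OF _ _ cont])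
      fix z assume z: "x < z" "z < 0"
      with assms have "a < z" "z < b" by auto
      moreover from sign[OF this] z have "f' z \<le> 0" by (simp add: zero_le_mult_iff)
      ultimately show "\<exists>y. (f has_real_derivative y) (at z) \<and> y \<le> 0"
        using deriv by blast
    qed (use assms False in auto)
  qed
qed

lemma ln_add_one_le_cubic:
  fixes w :: real
  assumes "-1 < w"
  shows "ln (1 + w) \<le> w - w^2/2 + w^3/3"
proof -
  let ?f = "\<lambda>x::real. x - x^2/2 + x^3/3 - ln (1 + x)"
  have "?f 0 \<le> ?f w"
  proof (rule value_at_0_le_if_deriv_sign[where a = "-1" and b = "\<bar>w\<bar> + 1"])
    fix z :: real assume z: "-1 < z" "z < \<bar>w\<bar> + 1"
    then show "(?f has_real_derivative z^3 / (1 + z)) (at z)"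
      by (auto intro!: derivative_eq_intros simp: field_simps power2_eq_square power3_eq_cube)
    have "z * (z^3 / (1 + z)) = (z^2)^2 / (1 + z)"
      by (simp add: power2_eq_square power3_eq_cube)
    then show "0 \<le> z * (z^3 / (1 + z))"
      using z by simp
  qed (use assms in auto)
  then show ?thesis by simp
qed

lemma ln_add_one_ge_quartic:
  fixes w :: real
  assumes "-1/2 < w"
  shows "w - w^2/2 + w^3/3 - w^4/2 \<le> ln (1 + w)"
proof -
  let ?f = "\<lambda>x::real. ln (1 + x) - (x - x^2/2 + x^3/3 - x^4/2)"
  have "?f 0 \<le> ?f w"
  proof (rule value_at_0_le_if_deriv_sign[where a = "-1/2" and b = "\<bar>w\<bar> + 1"])
    fix z :: real assume z: "-1/2 < z" "z < \<bar>w\<bar> + 1"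
    then show "(?f has_real_derivative z^3 * (1 + 2*z) / (1 + z)) (at z)"
      by (auto intro!: derivative_eq_intros simp: field_simps power2_eq_square power3_eq_cube)
    have "0 \<le> z^4 * ((1 + 2*z) / (1 + z))"
      using z by simp
    then show "0 \<le> z * (z^3 * (1 + 2*z) / (1 + z))"
      by (simp add: power3_eq_cube power4_eq_xxxx mult.assoc)
  qed (use assms in auto)
  then show ?thesis by simp
qed

lemma cube_mult_le_abs_cube:
  fixes w p :: real
  assumes "\<bar>p\<bar> \<le> 1"
  shows "w^3 * p \<le> \<bar>w\<bar>^3"
proof -
  have "w^3 * p \<le> \<bar>w\<bar>^3 * \<bar>p\<bar>"
    by (metis abs_ge_self abs_mult power_abs)
  also have "\<dots> \<le> \<bar>w\<bar>^3"
    using assms by (intro mult_left_le) auto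
  finally show ?thesis .
qed

lemma abs_Lambda_one_add_sub_quadratic_le:
  fixes w :: real
  assumes w: "\<bar>w\<bar> \<le> 1/4"
  shows "\<bar>Lambda (1 + w) - (w + w^2/2)\<bar> \<le> \<bar>w\<bar>^3"
proof -
  have "-1/2 < w" using w by auto
  have "(1 + w) * (w - w^2/2 + w^3/3 - w^4/2) \<le> Lambda (1 + w)"
    unfolding Lambda_def using ln_add_one_ge_quartic[OF \<open>-1/2 < w\<close>] w
    by (intro mult_left_mono) auto
  moreover have "(1 + w) * (w - w^2/2 + w^3/3 - w^4/2)
      = w + w^2/2 - w^3 * (1/6 + w/6 + w^2/2)"
    by (simp add: field_simps power2_eq_square power3_eq_cube power4_eq_xxxx)
  moreover have "w^3 * (1/6 + w/6 + w^2/2) \<le> \<bar>w\<bar>^3"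
  proof (rule cube_mult_le_abs_cube)
    have "w^2 \<le> 1/16"
      using abs_le_square_iff[of w "1/4"] w by (simp add: power2_eq_square)
    then show "\<bar>1/6 + w/6 + w^2/2\<bar> \<le> 1" using w by (auto simp: abs_le_iff)
  qed
  moreover have "Lambda (1 + w) \<le> (1 + w) * (w - w^2/2 + w^3/3)"
    unfolding Lambda_def using ln_add_one_le_cubic[of w] w
    by (intro mult_left_mono) auto
  moreover have "(1 + w) * (w - w^2/2 + w^3/3) = w + w^2/2 + w^3 * (w/3 - 1/6)"
    by (simp add: field_simps power2_eq_square power3_eq_cube power4_eq_xxxx)
  moreover have "w^3 * (w/3 - 1/6) \<le> \<bar>w\<bar>^3"
    using w by (intro cube_mult_le_abs_cube) (auto simp: abs_le_iff)
  ultimately show ?thesis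
    unfolding abs_le_iff by linarith
qed

lemma Lambda_ge_quadratic_near_1:
  fixes z \<delta> :: real
  assumes "\<bar>z - 1\<bar> \<le> \<delta>" "\<delta> \<le> 1/4"
  shows "(z - 1) + (1/2 - \<delta>) * (z - 1)^2 \<le> Lambda z"
proof -
  define w where "w = z - 1"
  have "\<bar>w\<bar>^3 = \<bar>w\<bar> * w^2"
    by (simp add: power3_eq_cube power2_eq_square)
  also have "\<dots> \<le> \<delta> * w^2"
    using assms by (intro mult_right_mono) (auto simp: w_def)
  finally have "\<bar>w\<bar>^3 \<le> \<delta> * w^2" .
  moreover have "w + w^2/2 - \<bar>w\<bar>^3 \<le> Lambda (1 + w)"
    using abs_Lambda_one_add_sub_quadratic_le[of w] assms unfolding abs_le_iff w_def by linarith
  ultimately show ?thesis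
    by (simp add: w_def algebra_simps)
qed

lemma Lambda_le_quadratic_near_1:
  fixes z \<nu> :: real
  assumes "\<bar>z - 1\<bar> = \<nu>" "\<nu> \<le> 1/4"
  shows "Lambda z \<le> (z - 1) + \<nu>^2/2 + \<nu>^3"
proof -
  have "(z - 1)^2 = \<nu>^2"
    using assms(1) by (metis power2_abs)
  then show ?thesis
    using abs_Lambda_one_add_sub_quadratic_le[of "z - 1"] assms by (simp add: abs_le_iff)
qed

lemma Lambda_mult:
  assumes "0 < a" "0 < b"
  shows "Lambda (a * b) = b * Lambda a + a * Lambda b"
  using assms by (simp add: Lambda_def ln_mult algebra_simps)

lemma abs_prod_one_add_sub_one_le:
  fixes a :: "'i \<Rightarrow> real"
  assumes "finite I" and a: "\<And>i. i \<in> I \<Longrightarrow> \<bar>a i\<bar> \<le> y" and small: "real (card I) * y \<le> 1/2"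
  shows "\<bar>(\<Prod>i\<in>I. 1 + a i) - 1\<bar> \<le> 2 * real (card I) * y"
proof (cases "I = {}")
  case False
  then obtain i where "i \<in> I" by blast
  then have "0 \<le> y"
    using a[of i] by linarith
  moreover have "1 \<le> card I"
    using False \<open>finite I\<close> by (simp add: Suc_le_eq card_gt_0_iff)
  then have "1 * y \<le> real (card I) * y"
    using \<open>0 \<le> y\<close> by (intro mult_right_mono) auto
  ultimately have y: "0 \<le> y" "y \<le> 1/2"
    using small by auto
  have bounds: "1 - y \<le> 1 + a i" "1 + a i \<le> 1 + y" "0 \<le> 1 + a i" if "i \<in> I" for i
    using a[OF that] y by auto
  have "1 - real (card I) * y \<le> (1 - y) ^ card I"
    using Bernoulli_inequality[of "-y" "card I"] y by simp
  also have "\<dots> \<le> (\<Prod>i\<in>I. 1 + a i)"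
    using bounds y by (subst prod_constant[symmetric], intro prod_mono) auto
  finally have lower: "1 - real (card I) * y \<le> (\<Prod>i\<in>I. 1 + a i)" .
  have "(\<Prod>i\<in>I. 1 + a i) \<le> (1 + y) ^ card I"
    using bounds y by (subst prod_constant[symmetric], intro prod_mono) auto
  also have "\<dots> \<le> exp y ^ card I"
    using y by (intro power_mono) auto
  also have "\<dots> = exp (real (card I) * y)"
    by (simp add: exp_of_nat_mult)
  also have "\<dots> \<le> 1 + 2 * (real (card I) * y)"
    using exp_bound_lemma[of "real (card I) * y"] small y by simp
  finally show ?thesis using lower y by (simp add: abs_le_iff)
qed simp

lemma one_add_power_even_odd_parts_ge:
  fixes u :: real
  assumes "0 \<le> u"
  shows "1 + real n * (real n - 1) / 2 * u^2 \<le> ((1 + u)^n + (1 - u)^n) / 2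
       \<and> real n * u \<le> ((1 + u)^n - (1 - u)^n) / 2"
proof (induction n)
  case (Suc n)
  define even_part where "even_part = ((1 + u)^n + (1 - u)^n) / 2"
  define odd_part where "odd_part = ((1 + u)^n - (1 - u)^n) / 2"
  from Suc.IH have even: "1 + real n * (real n - 1) / 2 * u^2 \<le> even_part"
    and odd: "real n * u \<le> odd_part"
    by (auto simp: even_part_def odd_part_def)
  have "0 \<le> real n * (real n - 1) / 2 * u^2"
    by (cases n) auto
  with even have "u * 1 \<le> u * even_part"
    using assms by (intro mult_left_mono) auto
  moreover have "u * (real n * u) \<le> u * odd_part"
    using odd assms by (intro mult_left_mono)
  moreover have "((1 + u)^Suc n + (1 - u)^Suc n) / 2 = even_part + u * odd_part"
    and "((1 + u)^Suc n - (1 - u)^Suc n) / 2 = odd_part + u * even_part"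
    by (simp_all add: even_part_def odd_part_def field_simps)
  ultimately show ?case
    using even odd by (simp add: field_simps power2_eq_square)
qed simp

section \<open>Sums over sign vectors\<close>

lemma sum_PiE_prod_const:
  fixes f :: "'a \<Rightarrow> 'b :: comm_semiring_1"
  assumes "finite I" "finite A"
  shows "(\<Sum>t\<in>PiE I (\<lambda>_. A). \<Prod>i\<in>I. f (t i)) = (\<Sum>a\<in>A. f a) ^ card I"
  using prod_sum_PiE[of I "\<lambda>_. A" "\<lambda>_ a. f a"] assms by simp

lemma sum_PiE_mult_components_eq_0:
  fixes A :: "'a :: comm_ring_1 set"
  assumes "finite I" "finite A" "i \<in> I" "j \<in> I" "i \<noteq> j" and centred: "(\<Sum>a\<in>A. a) = 0"
  shows "(\<Sum>t\<in>PiE I (\<lambda>_. A). t i * t j) = 0"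
proof -
  define h where "h k a = (if k = i \<or> k = j then a else (1 :: 'a))" for k a
  have "(\<Prod>k\<in>I. h k (t k)) = t i * t j" for t
  proof -
    have "(\<Prod>k\<in>I. h k (t k)) = (\<Prod>k\<in>{i, j}. h k (t k)) * (\<Prod>k\<in>I - {i, j}. h k (t k))"
      using assms by (subst prod.subset_diff[of "{i, j}"]) (auto simp: mult.commute)
    also have "(\<Prod>k\<in>I - {i, j}. h k (t k)) = 1"
      by (intro prod.neutral) (auto simp: h_def)
    finally show ?thesis using \<open>i \<noteq> j\<close> by (simp add: h_def)
  qed
  then have "(\<Sum>t\<in>PiE I (\<lambda>_. A). t i * t j) = (\<Prod>k\<in>I. \<Sum>a\<in>A. h k a)"
    using assms by (simp add: prod_sum_PiE)
  also have "\<dots> = 0"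
    using assms by (intro prod_zero bexI[of _ i]) (auto simp: h_def)
  finally show ?thesis .
qed

lemma integral_PiM_pmf_of_set:
  fixes I :: "'i set" and A :: "'a set" and g :: "('i \<Rightarrow> 'a) \<Rightarrow> real"
  defines "M \<equiv> PiM I (\<lambda>_. measure_pmf (pmf_of_set A))"
  assumes I: "finite I" and A: "finite A" "A \<noteq> {}" and g: "g \<in> borel_measurable M"
  shows "integral\<^sup>L M g = (\<Sum>t\<in>PiE I (\<lambda>_. A). g t) / real (card A) ^ card I"
proof -
  define T where "T = PiE I (\<lambda>_. A)"
  interpret finite_product_prob_space "\<lambda>_. measure_pmf (pmf_of_set A)" I
    using I by unfold_locales
  have T: "T \<in> sets M"
    unfolding M_def T_def by (rule sets_PiM_I_finite) (use I in auto)
  have single: "{t} = PiE I (\<lambda>i. {t i})" if "t \<in> T" for t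
    using that by (force simp: T_def PiE_iff extensional_def)
  have "AE x in M. x \<in> T"
  proof -
    have "AE x in M. \<forall>i\<in>I. x i \<in> A"
      unfolding M_def using I A
      by (intro AE_finite_allI AE_PiM_component) (auto simp: AE_measure_pmf_iff measure_pmf.prob_space_axioms)
    with AE_space show ?thesis
      by eventually_elim (auto simp: M_def T_def space_PiM PiE_iff)
  qed
  then have "integral\<^sup>L M g = (\<integral>x. g x * indicator T x \<partial>M)"
    using g T by (intro integral_cong_AE) (auto split: split_indicator)
  also have "\<dots> = (\<Sum>t\<in>T. g t * measure M {t})"
    using T single A I
    by (intro integral_indicator_finite_real) (auto simp: T_def M_def less_top[symmetric] finite_PiE)
  also have "\<dots> = (\<Sum>t\<in>T. g t / real (card A) ^ card I)"
  proof (intro sum.cong refl)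
    fix t assume "t \<in> T"
    then have "measure M {t} = (\<Prod>i\<in>I. measure (pmf_of_set A) {t i})"
      unfolding single[OF \<open>t \<in> T\<close>] M_def by (intro finite_measure_PiM_emb) auto
    also have "\<dots> = 1 / real (card A) ^ card I"
      using \<open>t \<in> T\<close> A by (simp add: T_def measure_pmf_single PiE_iff power_one_over)
    finally show "g t * measure M {t} = g t / real (card A) ^ card I" by simp
  qed
  finally show ?thesis by (simp add: T_def sum_divide_distrib)
qed

section \<open>The star weight\<close>

(* With c and tau as above, the sum over sigma inside the first Lambda of the Bethe integrand is
   2 c^d star_weight tau d mu. *)
definition star_weight :: "real \<Rightarrow> nat \<Rightarrow> (nat \<Rightarrow> real) \<Rightarrow> real" where
  "star_weight \<tau> d t = ((\<Prod>i<d. 1 + \<tau> * t i) + (\<Prod>i<d. 1 - \<tau> * t i)) / 2"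

lemma abs_star_weight_sub_one_le:
  assumes "\<And>i. i < d \<Longrightarrow> \<bar>\<tau> * t i\<bar> \<le> y" and "real d * y \<le> 1/2"
  shows "\<bar>star_weight \<tau> d t - 1\<bar> \<le> 2 * real d * y"
proof -
  have "\<bar>(\<Prod>i<d. 1 + \<tau> * t i) - 1\<bar> \<le> 2 * real d * y"
    using abs_prod_one_add_sub_one_le[of "{..<d}" "\<lambda>i. \<tau> * t i" y] assms by simp
  moreover have "\<bar>(\<Prod>i<d. 1 - \<tau> * t i) - 1\<bar> \<le> 2 * real d * y"
    using abs_prod_one_add_sub_one_le[of "{..<d}" "\<lambda>i. - \<tau> * t i" y] assms by simp
  ultimately show ?thesis
    by (auto simp: star_weight_def abs_le_iff field_simps)
qed

lemma abs_PiE_two_point: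
  fixes X :: real
  assumes "t \<in> PiE I (\<lambda>_. {X, -X})" "i \<in> I"
  shows "\<bar>t i\<bar> = \<bar>X\<bar>"
  using PiE_mem[OF assms] by auto

lemma abs_star_weight_sub_one_two_point:
  assumes "t \<in> PiE {..<d} (\<lambda>_. {X, -X})" "real d * \<bar>\<tau> * X\<bar> \<le> 1/2"
  shows "\<bar>star_weight \<tau> d t - 1\<bar> \<le> 2 * real d * \<bar>\<tau> * X\<bar>"
  using assms by (intro abs_star_weight_sub_one_le) (auto simp: abs_mult abs_PiE_two_point)

lemma star_weight_pos_two_point:
  assumes "t \<in> PiE {..<d} (\<lambda>_. {X, -X})" "2 * real d * \<bar>\<tau> * X\<bar> < 1"
  shows "0 < star_weight \<tau> d t"
proof -
  have "\<bar>star_weight \<tau> d t - 1\<bar> \<le> 2 * real d * \<bar>\<tau> * X\<bar>"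
    using assms by (intro abs_star_weight_sub_one_two_point) auto
  then show ?thesis
    using assms(2) by (simp add: abs_le_iff)
qed

lemma abs_mult_0_1_two_point:
  fixes X :: real and d :: nat
  assumes "t \<in> PiE {..<d} (\<lambda>_. {X, -X})" "2 \<le> d"
  shows "\<bar>t 0 * t 1\<bar> = X^2"
  using assms by (simp add: abs_mult abs_PiE_two_point power2_eq_square)

context
  fixes X \<tau> :: real and d :: nat
  assumes X: "X \<noteq> 0"
begin

lemma card_PiE_two_point: "card (PiE {..<d} (\<lambda>_. {X, -X})) = 2 ^ d"
  using X by (simp add: card_PiE numeral_2_eq_2)

lemma sum_PiE_two_point_mult_0_1:
  "2 \<le> d \<Longrightarrow> (\<Sum>t\<in>PiE {..<d} (\<lambda>_. {X, -X}). t 0 * t 1) = 0"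
  using X by (intro sum_PiE_mult_components_eq_0) auto

lemma sum_PiE_two_point_prod:
  fixes f :: "real \<Rightarrow> real"
  shows "(\<Sum>t\<in>PiE {..<d} (\<lambda>_. {X, -X}). \<Prod>i<d. f (t i)) = (f X + f (-X)) ^ d"
  using sum_PiE_prod_const[of "{..<d}" "{X, -X}" f] X by simp

lemma sum_PiE_two_point_prod_mult:
  fixes f g :: "real \<Rightarrow> real"
  shows "(\<Sum>t\<in>PiE {..<d} (\<lambda>_. {X, -X}). (\<Prod>i<d. f (t i)) * (\<Prod>i<d. g (t i)))
     = (f X * g X + f (-X) * g (-X)) ^ d"
  using sum_PiE_two_point_prod[of "\<lambda>a. f a * g a"] by (simp add: prod.distrib)

lemma sum_star_weight:
  "(\<Sum>t\<in>PiE {..<d} (\<lambda>_. {X, -X}). star_weight \<tau> d t) = 2 ^ d"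
  using sum_PiE_two_point_prod[of "\<lambda>a. 1 + \<tau> * a"] sum_PiE_two_point_prod[of "\<lambda>a. 1 - \<tau> * a"]
  by (simp add: star_weight_def sum_divide_distrib[symmetric] sum.distrib)

lemma sum_star_weight_sub_one_sq:
  defines "y \<equiv> (\<tau> * X)^2"
  shows "(\<Sum>t\<in>PiE {..<d} (\<lambda>_. {X, -X}). (star_weight \<tau> d t - 1)^2)
     = 2 ^ d * (((1 + y)^d + (1 - y)^d) / 2 - 1)"
proof -
  define T where "T = PiE {..<d} (\<lambda>_. {X, -X})"
  define Pp where "Pp t = (\<Prod>i<d. 1 + \<tau> * t i)" for t :: "nat \<Rightarrow> real"
  define Pm where "Pm t = (\<Prod>i<d. 1 - \<tau> * t i)" for t :: "nat \<Rightarrow> real"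
  have "(\<Sum>t\<in>T. Pp t) = 2 ^ d" "(\<Sum>t\<in>T. Pm t) = 2 ^ d"
    using sum_PiE_two_point_prod[of "\<lambda>a. 1 + \<tau> * a"] sum_PiE_two_point_prod[of "\<lambda>a. 1 - \<tau> * a"]
    by (simp_all add: T_def Pp_def Pm_def)
  moreover have "(\<Sum>t\<in>T. Pp t * Pp t) = (2 * (1 + y)) ^ d"
    using sum_PiE_two_point_prod_mult[of "\<lambda>a. 1 + \<tau> * a" "\<lambda>a. 1 + \<tau> * a"]
    by (simp add: T_def Pp_def y_def power2_eq_square algebra_simps)
  moreover have "(\<Sum>t\<in>T. Pm t * Pm t) = (2 * (1 + y)) ^ d"
    using sum_PiE_two_point_prod_mult[of "\<lambda>a. 1 - \<tau> * a" "\<lambda>a. 1 - \<tau> * a"]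
    by (simp add: T_def Pm_def y_def power2_eq_square algebra_simps)
  moreover have "(\<Sum>t\<in>T. Pp t * Pm t) = (2 * (1 - y)) ^ d"
    using sum_PiE_two_point_prod_mult[of "\<lambda>a. 1 + \<tau> * a" "\<lambda>a. 1 - \<tau> * a"]
    by (simp add: T_def Pp_def Pm_def y_def power2_eq_square algebra_simps)
  moreover have "(star_weight \<tau> d t - 1)^2
      = (Pp t * Pp t + 2 * (Pp t * Pm t) + Pm t * Pm t) / 4 - (Pp t + Pm t) + 1" for t
    by (simp add: star_weight_def Pp_def Pm_def field_simps power2_eq_square)
  then have "(\<Sum>t\<in>T. (star_weight \<tau> d t - 1)^2)
      = ((\<Sum>t\<in>T. Pp t * Pp t) + 2 * (\<Sum>t\<in>T. Pp t * Pm t) + (\<Sum>t\<in>T. Pm t * Pm t)) / 4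
        - ((\<Sum>t\<in>T. Pp t) + (\<Sum>t\<in>T. Pm t)) + card T"
    by (simp add: sum.distrib sum_subtractf sum_divide_distrib[symmetric] sum_distrib_left)
  ultimately show ?thesis
    unfolding T_def by (simp only: power_mult_distrib) (simp add: card_PiE_two_point field_simps)
qed

lemma sum_star_weight_sub_one_sq_ge:
  "2 ^ d * (real d * (real d - 1) / 2 * (\<tau> * X)^4)
     \<le> (\<Sum>t\<in>PiE {..<d} (\<lambda>_. {X, -X}). (star_weight \<tau> d t - 1)^2)"
proof -
  define y where "y = (\<tau> * X)^2"
  have "y^2 = (\<tau> * X)^4" "0 \<le> y"
    by (simp_all add: y_def flip: power_mult)
  then have "real d * (real d - 1) / 2 * (\<tau> * X)^4 \<le> ((1 + y)^d + (1 - y)^d) / 2 - 1"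
    using one_add_power_even_odd_parts_ge[of y d] by (auto simp: field_simps)
  then show ?thesis
    by (simp add: sum_star_weight_sub_one_sq y_def)
qed

end

section \<open>The Bethe free energy at pi_star\<close>

definition ising_integrand :: "real \<Rightarrow> nat \<Rightarrow> (nat \<Rightarrow> real) \<Rightarrow> real" where
  "ising_integrand \<beta> d mu =
     Lambda (\<Sum>\<sigma>\<in>{-1, 1::real}. \<Prod>i<d. (1 - (1 - exp (-\<beta>)) * (1 + \<sigma> * mu i) / 2))
       / (2 powr (1 - real d) * (1 + exp (-\<beta>)) ^ d)
     - real d * Lambda (1 - (1 - exp (-\<beta>)) * (1 + mu 0 * mu 1) / 2) / (1 + exp (-\<beta>))"

lemma ising_integrand_measurable:
  assumes "d \<le> n" "2 \<le> n"
  shows "ising_integrand \<beta> d \<in> borel_measurable (PiM {..<n} (\<lambda>_. measure_pmf p))"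
proof -
  have component: "(\<lambda>x. x i) \<in> borel_measurable (PiM {..<n} (\<lambda>_. measure_pmf p))" if "i < n" for i
    using that by (intro measurable_compose[OF measurable_component_singleton, where g = "\<lambda>x. x"]) auto
  show ?thesis
    unfolding ising_integrand_def Lambda_def using assms
    by (intro borel_measurable_diff borel_measurable_divide borel_measurable_times borel_measurable_sum
        borel_measurable_prod borel_measurable_const borel_measurable_ln borel_measurable_add component) auto
qed

lemma B_Ising_pi_star_eq_sum:
  assumes "2 \<le> d" "\<epsilon> \<noteq> 0"
  shows "B_Ising (pi_star \<epsilon>) \<beta> d
       = (\<Sum>t\<in>PiE {..<d} (\<lambda>_. {2 * \<epsilon>, - (2 * \<epsilon>)}). ising_integrand \<beta> d t) / 2 ^ d"
proof -
  have "max d 2 = d" "card {2 * \<epsilon>, - (2 * \<epsilon>)} = 2"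
    using assms by auto
  moreover have "B_Ising (pi_star \<epsilon>) \<beta> d
      = (\<integral>mu. ising_integrand \<beta> d mu \<partial>PiM {..<max d 2} (\<lambda>_. measure_pmf (pmf_of_set {2 * \<epsilon>, - (2 * \<epsilon>)})))"
    by (simp add: B_Ising_def pi_star_def ising_integrand_def)
  ultimately show ?thesis
    using assms by (simp add: integral_PiM_pmf_of_set ising_integrand_measurable)
qed

lemma ising_integrand_eq:
  fixes \<beta> :: real and d :: nat and mu :: "nat \<Rightarrow> real"
  defines "\<tau> \<equiv> (1 - exp (-\<beta>)) / (1 + exp (-\<beta>))" and "c \<equiv> (1 + exp (-\<beta>)) / 2"
  defines "Z \<equiv> star_weight \<tau> d mu" and "e \<equiv> 1 - \<tau> * (mu 0 * mu 1)"
  assumes "0 < Z" "0 < e"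
  shows "ising_integrand \<beta> d mu
       = Z * (real d * ln c + ln 2) + Lambda Z - real d / 2 * (e * ln c + Lambda e)"
proof -
  have q: "0 < 1 + exp (-\<beta>)" by (simp add: add_pos_pos)
  then have c: "0 < c" by (simp add: c_def)
  have factor: "1 - (1 - exp (-\<beta>)) * (1 + \<sigma> * a) / 2 = c * (1 - \<sigma> * \<tau> * a)" for \<sigma> a
    using q by (simp add: \<tau>_def c_def field_simps)
  have "(\<Sum>\<sigma>\<in>{-1, 1::real}. \<Prod>i<d. (1 - (1 - exp (-\<beta>)) * (1 + \<sigma> * mu i) / 2))
      = c ^ d * ((\<Prod>i<d. 1 + \<tau> * mu i) + (\<Prod>i<d. 1 - \<tau> * mu i))"
    unfolding factor by (simp add: prod.distrib distrib_left add.commute)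
  also have "\<dots> = (2 * c ^ d) * Z"
    by (simp add: Z_def star_weight_def)
  finally have star: "(\<Sum>\<sigma>\<in>{-1, 1::real}. \<Prod>i<d. (1 - (1 - exp (-\<beta>)) * (1 + \<sigma> * mu i) / 2))
      = (2 * c ^ d) * Z" .
  have two_c: "1 + exp (-\<beta>) = 2 * c"
    by (simp add: c_def)
  then have normalisation: "2 powr (1 - real d) * (1 + exp (-\<beta>)) ^ d = 2 * c ^ d"
    by (simp add: powr_diff powr_realpow power_mult_distrib)
  have "Lambda (2 * c ^ d) = 2 * c ^ d * (real d * ln c + ln 2)"
    using c by (simp add: Lambda_def ln_mult ln_realpow algebra_simps)
  then have "Lambda ((2 * c ^ d) * Z) / (2 * c ^ d) = Z * (real d * ln c + ln 2) + Lambda Z"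
    using c \<open>0 < Z\<close> by (simp add: Lambda_mult field_simps)
  moreover have "real d * Lambda (c * e) / (1 + exp (-\<beta>)) = real d / 2 * (e * ln c + Lambda e)"
    unfolding two_c Lambda_mult[OF c \<open>0 < e\<close>] using c by (simp add: Lambda_def field_simps)
  moreover have "1 - (1 - exp (-\<beta>)) * (1 + mu 0 * mu 1) / 2 = c * e"
    using factor[of 1 "mu 0 * mu 1"] by (simp add: e_def)
  ultimately show ?thesis
    by (simp add: ising_integrand_def star normalisation)
qed

lemma sum_ising_integrand_eq:
  fixes \<beta> X :: real and d :: nat
  defines "\<tau> \<equiv> (1 - exp (-\<beta>)) / (1 + exp (-\<beta>))" and "c \<equiv> (1 + exp (-\<beta>)) / 2"
    and "T \<equiv> PiE {..<d} (\<lambda>_. {X, -X})"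
  assumes d: "2 \<le> d" and X: "X \<noteq> 0"
    and pos: "\<And>t. t \<in> T \<Longrightarrow> 0 < star_weight \<tau> d t \<and> 0 < 1 - \<tau> * (t 0 * t 1)"
  shows "(\<Sum>t\<in>T. ising_integrand \<beta> d t)
       = 2 ^ d * (ln 2 + real d / 2 * ln c) + (\<Sum>t\<in>T. Lambda (star_weight \<tau> d t))
         - real d / 2 * (\<Sum>t\<in>T. Lambda (1 - \<tau> * (t 0 * t 1)))"
proof -
  have sum_edge: "(\<Sum>t\<in>T. 1 - \<tau> * (t 0 * t 1)) = 2 ^ d"
    using sum_PiE_two_point_mult_0_1[OF X d] card_PiE_two_point[OF X]
    by (simp add: T_def sum_subtractf flip: sum_distrib_left)
  have sum_star: "(\<Sum>t\<in>T. star_weight \<tau> d t) = 2 ^ d"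
    unfolding T_def using X by (rule sum_star_weight)
  have "(\<Sum>t\<in>T. ising_integrand \<beta> d t)
      = (\<Sum>t\<in>T. (real d * ln c + ln 2) * star_weight \<tau> d t + Lambda (star_weight \<tau> d t)
                 - (real d / 2 * ln c) * (1 - \<tau> * (t 0 * t 1)) - real d / 2 * Lambda (1 - \<tau> * (t 0 * t 1)))"
    using pos by (intro sum.cong refl) (simp add: ising_integrand_eq[of \<beta> d, folded \<tau>_def c_def] algebra_simps)
  also have "\<dots> = (real d * ln c + ln 2) * (\<Sum>t\<in>T. star_weight \<tau> d t) + (\<Sum>t\<in>T. Lambda (star_weight \<tau> d t))
      - (real d / 2 * ln c) * (\<Sum>t\<in>T. 1 - \<tau> * (t 0 * t 1)) - real d / 2 * (\<Sum>t\<in>T. Lambda (1 - \<tau> * (t 0 * t 1)))"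
    by (simp add: sum.distrib sum_subtractf sum_distrib_left right_diff_distrib)
  also have "\<dots> = 2 ^ d * (ln 2 + real d / 2 * ln c) + (\<Sum>t\<in>T. Lambda (star_weight \<tau> d t))
         - real d / 2 * (\<Sum>t\<in>T. Lambda (1 - \<tau> * (t 0 * t 1)))"
    unfolding sum_star sum_edge by (simp add: algebra_simps)
  finally show ?thesis .
qed

lemma sum_Lambda_star_weight_ge:
  fixes \<tau> X :: real and d :: nat
  defines "T \<equiv> PiE {..<d} (\<lambda>_. {X, -X})" and "\<delta> \<equiv> 2 * real d * \<tau> * X"
  assumes "0 \<le> \<tau>" "0 < X" "\<delta> \<le> 1/4"
  shows "(1/2 - \<delta>) * (2 ^ d * (real d * (real d - 1) / 2 * (\<tau> * X)^4))
           \<le> (\<Sum>t\<in>T. Lambda (star_weight \<tau> d t))"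
proof -
  have X: "X \<noteq> 0" and abs_\<tau>X: "\<bar>\<tau> * X\<bar> = \<tau> * X"
    using assms by (simp_all add: abs_mult)
  have local: "(star_weight \<tau> d t - 1) + (1/2 - \<delta>) * (star_weight \<tau> d t - 1)^2
      \<le> Lambda (star_weight \<tau> d t)" if "t \<in> T" for t
  proof (rule Lambda_ge_quadratic_near_1[OF _ \<open>\<delta> \<le> 1/4\<close>])
    have "\<bar>star_weight \<tau> d t - 1\<bar> \<le> 2 * real d * \<bar>\<tau> * X\<bar>"
      using that \<open>\<delta> \<le> 1/4\<close> abs_\<tau>X
      by (intro abs_star_weight_sub_one_two_point) (auto simp: T_def \<delta>_def mult_ac)
    then show "\<bar>star_weight \<tau> d t - 1\<bar> \<le> \<delta>"
      unfolding abs_\<tau>X \<delta>_def by (simp add: mult_ac)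
  qed
  have "(\<Sum>t\<in>T. star_weight \<tau> d t - 1) = 0"
    using sum_star_weight[OF X] card_PiE_two_point[OF X] by (simp add: T_def sum_subtractf)
  have "(1/2 - \<delta>) * (2 ^ d * (real d * (real d - 1) / 2 * (\<tau> * X)^4))
      \<le> (1/2 - \<delta>) * (\<Sum>t\<in>T. (star_weight \<tau> d t - 1)^2)"
    using sum_star_weight_sub_one_sq_ge[OF X] \<open>\<delta> \<le> 1/4\<close> unfolding T_def by (intro mult_left_mono) auto
  also have "\<dots> = (\<Sum>t\<in>T. (star_weight \<tau> d t - 1) + (1/2 - \<delta>) * (star_weight \<tau> d t - 1)^2)"
    using \<open>(\<Sum>t\<in>T. star_weight \<tau> d t - 1) = 0\<close> by (simp add: sum.distrib sum_distrib_left)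
  also have "\<dots> \<le> (\<Sum>t\<in>T. Lambda (star_weight \<tau> d t))"
    using local by (rule sum_mono)
  finally show ?thesis .
qed

lemma sum_Lambda_edge_weight_le:
  fixes \<tau> X :: real and d :: nat
  defines "T \<equiv> PiE {..<d} (\<lambda>_. {X, -X})" and "\<nu> \<equiv> \<tau> * X^2"
  assumes d: "2 \<le> d" and "0 \<le> \<tau>" and X: "X \<noteq> 0" and "\<nu> \<le> 1/4"
  shows "(\<Sum>t\<in>T. Lambda (1 - \<tau> * (t 0 * t 1))) \<le> 2 ^ d * (\<nu>^2/2 + \<nu>^3)"
proof -
  have local: "Lambda (1 - \<tau> * (t 0 * t 1)) \<le> - \<tau> * (t 0 * t 1) + (\<nu>^2/2 + \<nu>^3)" if "t \<in> T" for t
  proof -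
    have "\<bar>(1 - \<tau> * (t 0 * t 1)) - 1\<bar> = \<nu>"
      using abs_mult_0_1_two_point[OF that[unfolded T_def] d] \<open>0 \<le> \<tau>\<close> by (simp add: \<nu>_def abs_mult)
    from Lambda_le_quadratic_near_1[OF this \<open>\<nu> \<le> 1/4\<close>] show ?thesis
      by simp
  qed
  have "(\<Sum>t\<in>T. Lambda (1 - \<tau> * (t 0 * t 1))) \<le> (\<Sum>t\<in>T. - \<tau> * (t 0 * t 1) + (\<nu>^2/2 + \<nu>^3))"
    using local by (rule sum_mono)
  also have "\<dots> = 2 ^ d * (\<nu>^2/2 + \<nu>^3)"
    using sum_PiE_two_point_mult_0_1[OF X d] card_PiE_two_point[OF X]
    by (simp add: T_def sum_subtractf flip: sum_distrib_left)
  finally show ?thesis .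
qed

lemma sum_ising_integrand_ge:
  fixes \<beta> X :: real and d :: nat
  defines "\<tau> \<equiv> (1 - exp (-\<beta>)) / (1 + exp (-\<beta>))" and "c \<equiv> (1 + exp (-\<beta>)) / 2"
    and "T \<equiv> PiE {..<d} (\<lambda>_. {X, -X})"
  defines "\<delta> \<equiv> 2 * real d * \<tau> * X" and "\<nu> \<equiv> \<tau> * X^2"
  assumes d: "2 \<le> d" and "0 < \<beta>" "0 < X" and small: "\<delta> \<le> 1/4" "\<nu> \<le> 1/4"
  shows "2 ^ d * (ln 2 + real d / 2 * ln c + real d / 2 * \<nu>^2 * ((1/2 - \<delta>) * (real d - 1) * \<tau>^2 - 1/2 - \<nu>))
         \<le> (\<Sum>t\<in>T. ising_integrand \<beta> d t)"
proof -
  have \<tau>: "0 \<le> \<tau>"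
    using \<open>0 < \<beta>\<close> by (simp add: \<tau>_def)
  have abs_\<tau>X: "\<bar>\<tau> * X\<bar> = \<tau> * X"
    using \<tau> \<open>0 < X\<close> by (simp add: abs_mult)
  have pos: "0 < star_weight \<tau> d t \<and> 0 < 1 - \<tau> * (t 0 * t 1)" if "t \<in> T" for t
  proof
    have "2 * real d * \<bar>\<tau> * X\<bar> < 1"
      using small(1) by (simp add: abs_\<tau>X \<delta>_def mult.assoc)
    with that show "0 < star_weight \<tau> d t"
      unfolding T_def by (rule star_weight_pos_two_point)
    have "\<bar>\<tau> * (t 0 * t 1)\<bar> = \<nu>"
      using abs_mult_0_1_two_point[OF that[unfolded T_def] d] \<tau> by (simp add: \<nu>_def abs_mult)
    then show "0 < 1 - \<tau> * (t 0 * t 1)"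
      using abs_ge_self[of "\<tau> * (t 0 * t 1)"] small by linarith
  qed
  have "2 ^ d * (ln 2 + real d / 2 * ln c + real d / 2 * \<nu>^2 * ((1/2 - \<delta>) * (real d - 1) * \<tau>^2 - 1/2 - \<nu>))
      = 2 ^ d * (ln 2 + real d / 2 * ln c)
        + (1/2 - \<delta>) * (2 ^ d * (real d * (real d - 1) / 2 * (\<tau> * X)^4))
        - real d / 2 * (2 ^ d * (\<nu>^2/2 + \<nu>^3))"
    by (simp add: \<nu>_def field_simps power2_eq_square power3_eq_cube power4_eq_xxxx)
  also have "\<dots> \<le> (\<Sum>t\<in>T. ising_integrand \<beta> d t)"
  proof -
    have "real d / 2 * (\<Sum>t\<in>T. Lambda (1 - \<tau> * (t 0 * t 1))) \<le> real d / 2 * (2 ^ d * (\<nu>^2/2 + \<nu>^3))"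
      using sum_Lambda_edge_weight_le[of d \<tau> X, folded T_def \<nu>_def] d \<tau> \<open>0 < X\<close> small
      by (intro mult_left_mono) auto
    moreover have "X \<noteq> 0"
      using \<open>0 < X\<close> by simp
    ultimately show ?thesis
      using sum_ising_integrand_eq[of d X \<beta>, folded \<tau>_def c_def T_def, OF d _ pos]
        sum_Lambda_star_weight_ge[of \<tau> X d, folded T_def \<delta>_def, OF \<tau> \<open>0 < X\<close> small(1)]
      by linarith
  qed
  finally show ?thesis .
qed

lemma B_Ising_pi_star_ge:
  fixes \<beta> \<epsilon> :: real and d :: nat
  defines "\<tau> \<equiv> (1 - exp (-\<beta>)) / (1 + exp (-\<beta>))" and "c \<equiv> (1 + exp (-\<beta>)) / 2"
  defines "\<nu> \<equiv> \<tau> * (2 * \<epsilon>)^2" and "\<delta> \<equiv> 4 * real d * \<tau> * \<epsilon>"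
  assumes d: "2 \<le> d" and "0 < \<beta>" and \<epsilon>: "0 < \<epsilon>" "16 * real d * \<epsilon> \<le> 1"
  shows "ln 2 + real d / 2 * ln c + real d / 2 * \<nu>^2 * ((1/2 - \<delta>) * (real d - 1) * \<tau>^2 - 1/2 - \<nu>)
         \<le> B_Ising (pi_star \<epsilon>) \<beta> d"
proof -
  have \<tau>: "0 \<le> \<tau>" "\<tau> \<le> 1"
    using \<open>0 < \<beta>\<close> by (simp_all add: \<tau>_def add_pos_pos)
  have "\<epsilon> \<le> real d * \<epsilon>"
    using d \<epsilon> by simp
  then have "\<epsilon> \<le> 1/16"
    using \<epsilon> by linarith
  have "\<delta> \<le> 4 * real d * \<epsilon>"
    using \<tau> \<epsilon> by (simp add: \<delta>_def mult_left_le_one_le mult_ac)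
  moreover have "\<nu> \<le> (2 * \<epsilon>)^2"
    using \<tau> by (simp add: \<nu>_def mult_left_le_one_le)
  moreover have "(2 * \<epsilon>)^2 \<le> (1/8)^2"
    using \<open>\<epsilon> \<le> 1/16\<close> \<epsilon> by (intro power_mono) auto
  ultimately have "\<delta> \<le> 1/4" "\<nu> \<le> 1/4"
    using \<epsilon> by (simp_all add: power2_eq_square)
  then show ?thesis
    using sum_ising_integrand_ge[of d \<beta> "2 * \<epsilon>", folded \<tau>_def c_def] B_Ising_pi_star_eq_sum[of d \<epsilon> \<beta>] d \<epsilon> \<open>0 < \<beta>\<close>
    by (simp add: \<nu>_def \<delta>_def pos_le_divide_eq mult_ac)
qed

lemma beta_star_threshold:
  fixes \<beta> :: real
  defines "\<tau> \<equiv> (1 - exp (-\<beta>)) / (1 + exp (-\<beta>))"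
  assumes "3 \<le> d" "beta_star d < \<beta>"
  shows "0 < \<beta>" "1 < (real d - 1) * \<tau>^2"
proof -
  define s where "s = sqrt (real d - 1)"
  have "1 < s" "s^2 = real d - 1"
    using \<open>3 \<le> d\<close> by (simp_all add: s_def)
  then have r: "1 < (s + 1) / (s - 1)" by simp
  have b: "ln ((s + 1) / (s - 1)) < \<beta>"
    using \<open>beta_star d < \<beta>\<close> by (simp add: beta_star_def s_def)
  moreover have "0 < ln ((s + 1) / (s - 1))"
    using r by simp
  ultimately show "0 < \<beta>" by linarith
  have "(s + 1) / (s - 1) = exp (ln ((s + 1) / (s - 1)))"
    using r by simp
  also have "\<dots> < exp \<beta>"
    using b by simp
  finally have "exp (-\<beta>) * (s + 1) < s - 1"
    using \<open>1 < s\<close> by (simp add: exp_minus divide_simps mult.commute)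
  then have "1 + exp (-\<beta>) < (1 - exp (-\<beta>)) * s"
    by (simp add: algebra_simps)
  then have "1 < \<tau> * s"
    using less_divide_eq_1_pos[of "1 + exp (-\<beta>)"] by (simp add: \<tau>_def add_pos_pos)
  then have "1 < (\<tau> * s)^2"
    by (simp add: one_less_power)
  also have "(\<tau> * s)^2 = (real d - 1) * \<tau>^2"
    using \<open>s^2 = real d - 1\<close> by (simp add: power_mult_distrib)
  finally show "1 < (real d - 1) * \<tau>^2" .
qed

lemma exists_small_pos_gain:
  fixes \<tau> :: real and d :: nat
  assumes "1 < (real d - 1) * \<tau>^2"
  shows "\<exists>\<epsilon>>0. 16 * real d * \<epsilon> \<le> 1
           \<and> 0 < (1/2 - 4 * real d * \<tau> * \<epsilon>) * (real d - 1) * \<tau>^2 - 1/2 - \<tau> * (2 * \<epsilon>)^2"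
proof -
  have "d \<noteq> 0"
    using assms zero_le_power2[of \<tau>] by (intro notI) simp
  have "((\<lambda>\<epsilon>. (1/2 - 4 * real d * \<tau> * \<epsilon>) * (real d - 1) * \<tau>^2 - 1/2 - \<tau> * (2 * \<epsilon>)^2)
          \<longlongrightarrow> ((real d - 1) * \<tau>^2 - 1) / 2) (at_right 0)"
    by (auto intro!: tendsto_eq_intros simp: field_simps)
  then have "\<forall>\<^sub>F \<epsilon> in at_right 0. 0 < (1/2 - 4 * real d * \<tau> * \<epsilon>) * (real d - 1) * \<tau>^2 - 1/2 - \<tau> * (2 * \<epsilon>)^2"
    using assms by (intro order_tendstoD(1)) auto
  moreover have "\<forall>\<^sub>F \<epsilon> in at_right 0. 0 < \<epsilon> \<and> 16 * real d * \<epsilon> \<le> 1"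
    using \<open>d \<noteq> 0\<close> unfolding eventually_at_right_field
    by (intro exI[of _ "1 / (16 * real d)"]) (auto simp: field_simps)
  ultimately show ?thesis
    using eventually_happens'[OF trivial_limit_at_right_real] eventually_conj by blast
qed

theorem proposition2p8:
  fixes d :: nat and \<beta> :: real
  assumes "d \<ge> 3" and "\<beta> > beta_star d"
  shows "\<exists>\<epsilon>>0. \<epsilon> \<le> 1/2 \<and>
           B_Ising (pi_star \<epsilon>) \<beta> d > ln 2 + real d / 2 * ln ((1 + exp (-\<beta>)) / 2)"
proof -
  define \<tau> where "\<tau> = (1 - exp (-\<beta>)) / (1 + exp (-\<beta>))"
  have "0 < \<beta>" and threshold: "1 < (real d - 1) * \<tau>^2"
    using beta_star_threshold[OF assms] by (simp_all add: \<tau>_def)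
  then obtain \<epsilon> where \<epsilon>: "0 < \<epsilon>" "16 * real d * \<epsilon> \<le> 1"
    and gain: "0 < (1/2 - 4 * real d * \<tau> * \<epsilon>) * (real d - 1) * \<tau>^2 - 1/2 - \<tau> * (2 * \<epsilon>)^2"
    using exists_small_pos_gain by blast
  have "\<tau> \<noteq> 0"
    using threshold by auto
  with gain \<epsilon> assms(1) have "0 < real d / 2 * (\<tau> * (2 * \<epsilon>)^2)^2
      * ((1/2 - 4 * real d * \<tau> * \<epsilon>) * (real d - 1) * \<tau>^2 - 1/2 - \<tau> * (2 * \<epsilon>)^2)"
    by simp
  then have "ln 2 + real d / 2 * ln ((1 + exp (-\<beta>)) / 2) < B_Ising (pi_star \<epsilon>) \<beta> d"
    using B_Ising_pi_star_ge[of d \<beta> \<epsilon>, folded \<tau>_def] assms(1) \<open>0 < \<beta>\<close> \<epsilon> by linarith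
  moreover have "\<epsilon> \<le> real d * \<epsilon>"
    using assms(1) \<epsilon> by simp
  then have "\<epsilon> \<le> 1/2"
    using \<epsilon> by linarith
  ultimately show ?thesis
    using \<epsilon> by (intro exI[of _ \<epsilon>]) auto
qed

end
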